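(* Let $\gamma\in(0,1)$, $T\ge1$, and let $Z_1,\dots,Z_T$ be i.i.d. geometric random variables with parameter $1-\gamma$, i.e. with values in $\{1,2,\dots\}$ and $\mathbb P(Z_j>i)=\gamma^i$ for all integers $i\ge0$. Then $$\mathbb E\Big[\max_{j\in[T]}\frac{Z_j}{\log(1+Z_j)}\Big]\le\frac{4+2\log T}{1-\gamma}.$$ *)

theory Defs
  imports "HOL-Probability.Probability"
begin

end

theory Submission
  imports Defs
begin

text \<open>Since \<open>n / ln (1 + n) \<le> 1 + n\<close>, the maximum is at most \<open>1 + K + \<Sum>\<^sub>j (Z\<^sub>j - K)\<^sup>+\<close>
  for every truncation level \<open>K\<close>. The geometric tail gives \<open>E (Z\<^sub>j - K)\<^sup>+ = \<gamma>\<^sup>K / (1 - \<gamma>)\<close>,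
  and \<open>K = \<lceil>ln T / (1 - \<gamma>)\<rceil>\<close> makes \<open>T \<gamma>\<^sup>K \<le> 1\<close>.\<close>

lemma divide_ln_one_plus_le:
  fixes x :: real
  assumes "0 \<le> x"
  shows "x / ln (1 + x) \<le> 1 + x"
proof (cases "x = 0")
  case False
  with assms have pos: "0 < x / (1 + x)" by simp
  have "x / (1 + x) \<le> ln (1 + x)"
    using ln_add1_ge[OF assms] by (simp add: add.commute)
  moreover from this pos have "0 < ln (1 + x)" by linarith
  ultimately have "x / ln (1 + x) \<le> x / (x / (1 + x))"
    using pos assms by (intro divide_left_mono) auto
  also have "\<dots> = 1 + x" using False assms by simp
  finally show ?thesis .
qed simp

lemma Max_le_truncation_sum:
  fixes h :: "nat \<Rightarrow> real" and z :: "'j \<Rightarrow> nat"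
  assumes "finite J" "J \<noteq> {}" "\<And>n. h n \<le> 1 + real n"
  shows "Max ((\<lambda>j. h (z j)) ` J) \<le> real (1 + K) + (\<Sum>j\<in>J. real (z j - K))"
proof -
  obtain j where j: "j \<in> J" "Max ((\<lambda>j. h (z j)) ` J) = h (z j)"
    using Max_in[of "(\<lambda>j. h (z j)) ` J"] assms(1,2) by fastforce
  have "h (z j) \<le> real (1 + K) + real (z j - K)"
    using assms(3)[of "z j"] by linarith
  also have "real (z j - K) \<le> (\<Sum>j\<in>J. real (z j - K))"
    using assms(1) j(1) by (intro member_le_sum) auto
  finally show ?thesis using j(2) by simp
qed

lemma (in prob_space) nn_integral_diff_geometric:
  fixes Z :: "'a \<Rightarrow> nat" and \<gamma> :: real
  assumes Z: "Z \<in> measurable M (count_space UNIV)"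
    and "0 \<le> \<gamma>" "\<gamma> < 1"
    and tail: "\<And>i. prob {x \<in> space M. i < Z x} = \<gamma> ^ i"
  shows "(\<integral>\<^sup>+ x. of_nat (Z x - K) \<partial>M) = ennreal (\<gamma> ^ K / (1 - \<gamma>))"
proof -
  have "(\<integral>\<^sup>+ x. of_nat (Z x - K) \<partial>M) = (\<integral>\<^sup>+ x. ennreal_of_enat (enat (Z x - K)) \<partial>M)"
    by simp
  also have "\<dots> = (\<Sum>t. emeasure M {x \<in> space M. enat t < enat (Z x - K)})"
    using measurable_compose[OF Z, of "\<lambda>n. enat (n - K)"] by (intro nn_integral_enat_function) simp
  also have "\<dots> = (\<Sum>t. ennreal (\<gamma> ^ (K + t)))"
  proof (rule suminf_cong)
    fix t
    have "{x \<in> space M. enat t < enat (Z x - K)} = {x \<in> space M. K + t < Z x}" by auto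
    then show "emeasure M {x \<in> space M. enat t < enat (Z x - K)} = ennreal (\<gamma> ^ (K + t))"
      using tail emeasure_eq_measure by simp
  qed
  also have "\<dots> = ennreal (\<gamma> ^ K / (1 - \<gamma>))"
  proof (rule suminf_ennreal_eq)
    have "(\<lambda>t. \<gamma> ^ K * \<gamma> ^ t) sums (\<gamma> ^ K * (1 / (1 - \<gamma>)))"
      using geometric_sums[of \<gamma>] assms(2,3) by (intro sums_mult) simp
    then show "(\<lambda>t. \<gamma> ^ (K + t)) sums (\<gamma> ^ K / (1 - \<gamma>))"
      by (simp add: power_add)
  qed (use assms(2) in simp)
  finally show ?thesis .
qed

lemma (in prob_space) nn_integral_truncation_bound_geometric:
  fixes Z :: "'j \<Rightarrow> 'a \<Rightarrow> nat" and \<gamma> :: real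
  assumes "finite J"
    and Z: "\<And>j. j \<in> J \<Longrightarrow> Z j \<in> measurable M (count_space UNIV)"
    and \<gamma>: "0 \<le> \<gamma>" "\<gamma> < 1"
    and tail: "\<And>j i. j \<in> J \<Longrightarrow> prob {x \<in> space M. i < Z j x} = \<gamma> ^ i"
  shows "(\<integral>\<^sup>+ x. ennreal (real (1 + K) + (\<Sum>j\<in>J. real (Z j x - K))) \<partial>M)
    = ennreal (real (1 + K) + real (card J) * (\<gamma> ^ K / (1 - \<gamma>)))"
proof -
  have meas: "(\<lambda>x. of_nat (Z j x - K) :: ennreal) \<in> borel_measurable M" if "j \<in> J" for j
    using measurable_compose[OF Z[OF that], of "\<lambda>n. of_nat (n - K) :: ennreal"] by simp
  have "(\<integral>\<^sup>+ x. ennreal (real (1 + K) + (\<Sum>j\<in>J. real (Z j x - K))) \<partial>M)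
      = (\<integral>\<^sup>+ x. ennreal (real (1 + K)) + (\<Sum>j\<in>J. of_nat (Z j x - K)) \<partial>M)"
  proof (rule nn_integral_cong)
    fix x
    have "ennreal (\<Sum>j\<in>J. real (Z j x - K)) = (\<Sum>j\<in>J. ennreal (real (Z j x - K)))"
      by (rule sum_ennreal[symmetric]) simp
    also have "\<dots> = (\<Sum>j\<in>J. of_nat (Z j x - K))"
      by (simp only: ennreal_of_nat_eq_real_of_nat)
    finally have "ennreal (\<Sum>j\<in>J. real (Z j x - K)) = (\<Sum>j\<in>J. of_nat (Z j x - K))" .
    then show "ennreal (real (1 + K) + (\<Sum>j\<in>J. real (Z j x - K)))
        = ennreal (real (1 + K)) + (\<Sum>j\<in>J. of_nat (Z j x - K))"
      by (simp add: ennreal_plus sum_nonneg del: of_nat_add)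
  qed
  also have "\<dots> = ennreal (real (1 + K)) + (\<Sum>j\<in>J. \<integral>\<^sup>+ x. of_nat (Z j x - K) \<partial>M)"
    using meas by (simp add: nn_integral_add nn_integral_sum borel_measurable_sum emeasure_space_1
        del: of_nat_add)
  also have "\<dots> = ennreal (real (1 + K)) + of_nat (card J) * ennreal (\<gamma> ^ K / (1 - \<gamma>))"
    using nn_integral_diff_geometric[OF Z \<gamma> tail] by simp
  also have "\<dots> = ennreal (real (1 + K) + real (card J) * (\<gamma> ^ K / (1 - \<gamma>)))"
    using \<gamma> by (simp add: ennreal_plus ennreal_mult' ennreal_of_nat_eq_real_of_nat
        del: of_nat_add times_divide_eq_right)
  finally show ?thesis .
qed

lemma truncation_level_exists:
  fixes \<gamma> :: real and T :: nat
  assumes "0 < \<gamma>" "\<gamma> < 1" "1 \<le> T"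
  obtains K :: nat
  where "real (1 + K) + real T * (\<gamma> ^ K / (1 - \<gamma>)) \<le> (4 + 2 * ln (real T)) / (1 - \<gamma>)"
proof
  define p where "p = 1 - \<gamma>"
  define K where "K = nat \<lceil>ln (real T) / p\<rceil>"
  have p: "0 < p" "p \<le> 1" using assms(1,2) by (auto simp: p_def)
  have lnT: "0 \<le> ln (real T)" using assms(3) by simp
  have K: "ln (real T) / p \<le> real K" "real K \<le> ln (real T) / p + 1"
    unfolding K_def using lnT p by (auto simp: of_nat_nat intro: order.trans[OF le_of_int_ceiling])
  have "\<gamma> ^ K \<le> exp (- p) ^ K"
    using exp_ge_add_one_self[of "- p"] assms(1) by (intro power_mono) (auto simp: p_def)
  also have "\<dots> = exp (- (p * real K))" using exp_of_nat2_mult[of "- p" K] by simp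
  also have "\<dots> \<le> exp (- ln (real T))" using K(1) p by (simp add: field_simps)
  also have "\<dots> = 1 / real T" using assms(3) by (simp add: exp_minus inverse_eq_divide)
  finally have "real T * (\<gamma> ^ K / p) \<le> 1 / p"
    using assms(3) p by (simp add: field_simps)
  moreover have "1 \<le> 1 / p" "ln (real T) / p \<le> 2 * ln (real T) / p"
    using lnT p by (auto simp: divide_right_mono)
  ultimately have "real (1 + K) + real T * (\<gamma> ^ K / p) \<le> 4 / p + 2 * ln (real T) / p"
    using K(2) by simp
  then show "real (1 + K) + real T * (\<gamma> ^ K / (1 - \<gamma>)) \<le> (4 + 2 * ln (real T)) / (1 - \<gamma>)"
    by (simp add: p_def add_divide_distrib)
qed

theorem mainTheorem12:
  fixes M :: "'a measure" and Z :: "nat \<Rightarrow> 'a \<Rightarrow> nat"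
    and \<gamma> :: real and T :: nat
  assumes "prob_space M"
    and "0 < \<gamma>" and "\<gamma> < 1" and "T \<ge> 1"
    and "prob_space.indep_vars M (\<lambda>_. count_space UNIV) Z {1..T}"
    and "\<forall>j\<in>{1..T}. \<forall>i::nat. measure M {x \<in> space M. Z j x > i} = \<gamma> ^ i"
  shows "prob_space.expectation M
           (\<lambda>x. Max ((\<lambda>j. real (Z j x) / ln (1 + real (Z j x))) ` {1..T}))
         \<le> (4 + 2 * ln (real T)) / (1 - \<gamma>)"
proof -
  interpret prob_space M by fact
  define h where "h n = real n / ln (1 + real n)" for n :: nat
  have Z: "Z j \<in> measurable M (count_space UNIV)" if "j \<in> {1..T}" for j
    using assms(5) that unfolding indep_vars_def by auto
  obtain K where K: "real (1 + K) + real T * (\<gamma> ^ K / (1 - \<gamma>)) \<le> (4 + 2 * ln (real T)) / (1 - \<gamma>)"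
    using truncation_level_exists assms(2-4) by blast
  have "(\<integral>\<^sup>+ x. Max ((\<lambda>j. h (Z j x)) ` {1..T}) \<partial>M)
      \<le> (\<integral>\<^sup>+ x. ennreal (real (1 + K) + (\<Sum>j\<in>{1..T}. real (Z j x - K))) \<partial>M)"
    using assms(4) divide_ln_one_plus_le
    by (intro nn_integral_mono ennreal_leI Max_le_truncation_sum) (auto simp: h_def)
  also have "\<dots> = ennreal (real (1 + K) + real T * (\<gamma> ^ K / (1 - \<gamma>)))"
    using Z assms(2,3,6) by (subst nn_integral_truncation_bound_geometric) auto
  also have "\<dots> \<le> ennreal ((4 + 2 * ln (real T)) / (1 - \<gamma>))"
    using K by (rule ennreal_leI)
  finally have "expectation (\<lambda>x. Max ((\<lambda>j. h (Z j x)) ` {1..T})) \<le> (4 + 2 * ln (real T)) / (1 - \<gamma>)"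
    using assms(3,4) by (intro integral_real_bounded) auto
  then show ?thesis unfolding h_def .
qed

end
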